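(* Let $X$ be a nonsingular variety over an algebraically closed field, $E\to X$ a vector bundle of rank $n$, $0<q<n$, $r=n-q$, and $\pi:G^q(E)\to X$ the Grassmann bundle of rank $q$ quotients with tautological sequence $0\to S\to\pi^*E\to Q\to0$; let $x_1,\dots,x_q$ be the Chern roots of $Q$ and $x_{q+1},\dots,x_n$ those of $S$. Then for all sequences $\lambda=(\lambda_1,\dots,\lambda_q)$ and $\mu=(\mu_1,\dots,\mu_r)$ of nonnegative integers, $$\pi_*\Bigl(\prod_{1\le i\le q<j\le n}(x_i-tx_j)\,P_\lambda(Q;t)\,P_\mu(S;t)\Bigr)=\frac{v_{\lambda\mu}(t)}{v_\lambda(t)\,v_\mu(t)}\,P_{\lambda\mu}(E;t),$$ where $\lambda\mu=(\lambda_1,\dots,\lambda_q,\mu_1,\dots,\mu_r)$.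
   Context: $A(\cdot)$ is the Chow group, $t$ an indeterminate, push-forwards act coefficientwise in $t$. For a rank $m$ bundle $F$ on $Y$, $\tau_F:Fl(F)\to Y$ is the complete flag bundle of quotients of ranks $m,\dots,1$ with Chern roots $z_1,\dots,z_m$ ordered so that $(\tau_F)_*f(z)=\sum_{w\in S_m}w\bigl(f(y)/\prod_{i<j}(y_i-y_j)\bigr)$ evaluated at the Chern roots of $F$; for a sequence $\lambda$ of $m$ nonnegative integers, $R_\lambda(F;t)=(\tau_F)_*\bigl(z_1^{\lambda_1}\cdots z_m^{\lambda_m}\prod_{i<j}(z_i-tz_j)\bigr)$. $v_m(t)=\prod_{i=1}^m\frac{1-t^i}{1-t}$; $v_\lambda(t)=\prod_iv_{m_i}(t)$ where $m_1,\dots,m_d$ are the cardinalities of the level sets of $\lambda$ (maximal subsets of indices on which $\lambda$ is constant); $P_\lambda(F;t)=R_\lambda(F;t)/v_\lambda(t)$, a polynomial in $t$ and the Chern classes of $F$. The Gysin map of the Grassmann bundle is: for $f$ symmetric separately in $y_1,\dots,y_q$ and in $y_{q+1},\dots,y_n$, $\pi_*f(x_1,\dots,x_n)=\sum_{w\in S_n/(S_q\times S_r)}w\bigl(f(y)/\prod_{i\le q<j}(y_i-y_j)\bigr)$ evaluated at the Chern roots of $E$. The ratio $v_{\lambda\mu}/(v_\lambda v_\mu)$ is a polynomial in $t$. *)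

theory Defs
  imports "HOL-Combinatorics.Permutations"
begin

text \<open>Everything is expressed in terms of Chern roots, which are modelled as
  values y 0, ..., y (m-1) in a field.  Index i of the paper corresponds to i-1 here.\<close>

text \<open>Gysin map of the complete flag bundle of a rank m bundle F whose Chern roots
  are y 0, ..., y (m-1):  sum over w in S_m of w (f(y) / prod_{i<j} (y_i - y_j)).\<close>
definition flag_push :: "nat \<Rightarrow> ((nat \<Rightarrow> 'a::field) \<Rightarrow> 'a) \<Rightarrow> (nat \<Rightarrow> 'a) \<Rightarrow> 'a" where
  "flag_push m f y =
     (\<Sum>w | w permutes {..<m}.
        f (y \<circ> w) / (\<Prod>i<m. \<Prod>j\<in>{i<..<m}. (y (w i) - y (w j))))"

text \<open>R_lambda(F;t), where m = length lam is the rank of F.\<close>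
definition R_fn :: "nat list \<Rightarrow> (nat \<Rightarrow> 'a::field) \<Rightarrow> 'a \<Rightarrow> 'a" where
  "R_fn lam y t = flag_push (length lam)
      (\<lambda>z. (\<Prod>i<length lam. z i ^ (lam ! i)) *
            (\<Prod>i<length lam. \<Prod>j\<in>{i<..<length lam}. (z i - t * z j))) y"

text \<open>(1 - t^i)/(1 - t) as the polynomial 1 + t + ... + t^(i-1).\<close>
definition qint :: "nat \<Rightarrow> 'a::field \<Rightarrow> 'a" where
  "qint i t = (\<Sum>k<i. t ^ k)"

definition v_nat :: "nat \<Rightarrow> 'a::field \<Rightarrow> 'a" where
  "v_nat m t = (\<Prod>i\<in>{1..m}. qint i t)"

definition v_seq :: "nat list \<Rightarrow> 'a::field \<Rightarrow> 'a" where
  "v_seq lam t = (\<Prod>a\<in>set lam. v_nat (count_list lam a) t)"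

definition P_fn :: "nat list \<Rightarrow> (nat \<Rightarrow> 'a::field) \<Rightarrow> 'a \<Rightarrow> 'a" where
  "P_fn lam y t = R_fn lam y t / v_seq lam t"

text \<open>Gysin map of the Grassmann bundle G^q(E) of rank q quotients of a rank n bundle,
  with Chern roots y 0..y (n-1) of E.  The cosets S_n/(S_q x S_r) are represented by the
  shuffle permutations (increasing on {..<q} and on {q..<n}).\<close>
definition grass_push :: "nat \<Rightarrow> nat \<Rightarrow> ((nat \<Rightarrow> 'a::field) \<Rightarrow> 'a) \<Rightarrow> (nat \<Rightarrow> 'a) \<Rightarrow> 'a" where
  "grass_push q n f y =
     (\<Sum>w | w permutes {..<n} \<and> strict_mono_on {..<q} w \<and> strict_mono_on {q..<n} w.
        f (y \<circ> w) / (\<Prod>i<q. \<Prod>j\<in>{q..<n}. (y (w i) - y (w j))))"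

end

theory Submission
  imports Defs
begin

(* Write S_n for the permutations of {..<n}.  Both sides of the theorem are
   sums over permutations of Chern roots, and the identity is a regrouping of the sum
   defining R_{lam mu}(E;t):
   (1) every p in S_n factors uniquely as p = w o r, where w is a shuffle (increasing on
       {..<q} and on {q..<n}) and r lies in the block stabilizer S_q x S_r of {..<q};
   (2) the block stabilizer is the image of S_q x S_r under juxtaposition of permutations;
   (3) the summand of R_{lam mu} at a vector z of roots splits as
       [cross factor of z] * [summand of R_lam at z_1..z_q] * [summand of R_mu at z_{q+1}..z_n],
       and the cross factor  prod_{i<=q<j} (z_i - t z_j)/(z_i - z_j)  is invariant under
       the block stabilizer.
   Summing (3) over the stabilizer gives the cross factor times R_lam(Q) R_mu(S) at every
   shuffle, which is the summand of the Grassmann push-forward; dividing by the v-factors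
   turns R into P and yields the theorem.
   The identity is formal: it holds in any field (division by zero being 0). *)

section \<open>Strictly monotone enumerations\<close>

lemma strict_mono_on_sorted_image:
  fixes w :: "nat \<Rightarrow> nat"
  assumes "strict_mono_on {a..<b} w"
  shows "sorted_list_of_set (w ` {a..<b}) = map w [a..<b]"
proof -
  have "sorted_wrt (<) (map w [a..<b])"
    unfolding sorted_wrt_iff_nth_less by (auto intro: strict_mono_onD[OF assms])
  moreover have "length (map w [a..<b]) = card (w ` {a..<b})"
    using card_image[OF strict_mono_on_imp_inj_on[OF assms]] by simp
  ultimately show ?thesis
    using sorted_list_of_set.sorted_key_list_of_set_unique[of "w ` {a..<b}" "map w [a..<b]"]
    by simp
qed

lemma strict_mono_on_eq_by_image:
  fixes w w' :: "nat \<Rightarrow> nat"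
  assumes "strict_mono_on {a..<b} w" "strict_mono_on {a..<b} w'"
    and "w ` {a..<b} = w' ` {a..<b}" and "i \<in> {a..<b}"
  shows "w i = w' i"
proof -
  have "map w [a..<b] = map w' [a..<b]"
    using strict_mono_on_sorted_image[OF assms(1)] strict_mono_on_sorted_image[OF assms(2)]
    unfolding assms(3) by (rule trans[OF sym])
  moreover have "i \<in> set [a..<b]" using assms(4) by simp
  ultimately show ?thesis by (metis map_eq_conv)
qed

lemma permutes_image_tail:
  fixes q n :: nat
  assumes "w permutes {..<n}" "q \<le> n"
  shows "w ` {q..<n} = {..<n} - w ` {..<q}"
proof -
  have "{..<n} = {..<q} \<union> {q..<n}" using ivl_disj_un_one(2)[OF assms(2)] by simp
  then have "w ` {..<n} = w ` {..<q} \<union> w ` {q..<n}" by auto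
  moreover have "w ` {..<q} \<inter> w ` {q..<n} = {}"
    using permutes_inj[OF assms(1)] by (auto simp: inj_def) (metis not_le)
  ultimately show ?thesis using permutes_image[OF assms(1)] by auto
qed

section \<open>Shuffles and the block stabilizer\<close>

definition shuffle_perms :: "nat \<Rightarrow> nat \<Rightarrow> (nat \<Rightarrow> nat) set" where
  "shuffle_perms q n =
     {w. w permutes {..<n} \<and> strict_mono_on {..<q} w \<and> strict_mono_on {q..<n} w}"

definition block_perms :: "nat \<Rightarrow> nat \<Rightarrow> (nat \<Rightarrow> nat) set" where
  "block_perms q n = {r. r permutes {..<n} \<and> r ` {..<q} = {..<q}}"

lemma shuffle_eq_by_head_image:
  fixes q n :: nat
  assumes "w \<in> shuffle_perms q n" "w' \<in> shuffle_perms q n" "q \<le> n" "w ` {..<q} = w' ` {..<q}"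
  shows "w = w'"
proof
  fix i
  have perm: "w permutes {..<n}" "w' permutes {..<n}"
    and mono: "strict_mono_on {0..<q} w" "strict_mono_on {q..<n} w"
      "strict_mono_on {0..<q} w'" "strict_mono_on {q..<n} w'"
    using assms(1,2) by (auto simp: shuffle_perms_def atLeast0LessThan)
  have tail: "w ` {q..<n} = w' ` {q..<n}"
    using assms(4) permutes_image_tail[OF perm(1) assms(3)] permutes_image_tail[OF perm(2) assms(3)]
    by simp
  consider "i < q" | "q \<le> i" "i < n" | "n \<le> i" by linarith
  then show "w i = w' i"
  proof cases
    case 1
    then show ?thesis
      using strict_mono_on_eq_by_image[OF mono(1,3)] assms(4) by (simp add: atLeast0LessThan)
  next
    case 2
    then show ?thesis using strict_mono_on_eq_by_image[OF mono(2,4) tail] by simp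
  next
    case 3
    then show ?thesis using permutes_not_in[OF perm(1)] permutes_not_in[OF perm(2)] by simp
  qed
qed

text \<open>Every q-element subset A of {..<n} is the head image of a shuffle: list A and its
  complement increasingly, one after the other.\<close>
lemma shuffle_with_head_image:
  fixes q n :: nat
  assumes A: "A \<subseteq> {..<n}" "card A = q"
  shows "\<exists>w\<in>shuffle_perms q n. w ` {..<q} = A"
proof -
  define B where "B = {..<n} - A"
  define la where "la = sorted_list_of_set A"
  define lb where "lb = sorted_list_of_set B"
  have fin: "finite A" "finite B" using A(1) unfolding B_def by (auto intro: finite_subset)
  have "q \<le> n" using card_mono[OF _ A(1)] A(2) by simp
  have la: "set la = A" "length la = q" "sorted_wrt (<) la"
    unfolding la_def using fin A(2) by auto
  have lb: "set lb = B" "length lb = n - q" "sorted_wrt (<) lb"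
    unfolding lb_def B_def using fin A by (auto simp: card_Diff_subset finite_subset)
  define w where "w i = (if i < q then la ! i else if i < n then lb ! (i - q) else i)" for i
  have head: "w ` {..<q} = A"
  proof -
    have "w ` {..<q} = (!) la ` {..<length la}" using la(2) by (auto simp: w_def)
    then show ?thesis using la(1) by (metis atLeast0LessThan list.set_map map_nth set_upt)
  qed
  have tail: "w ` {q..<n} \<subseteq> B" using lb by (auto simp: w_def)
  have mono_head: "strict_mono_on {..<q} w"
    unfolding strict_mono_on_def w_def using la sorted_wrt_nth_less by fastforce
  have mono_tail: "strict_mono_on {q..<n} w"
  proof (rule strict_mono_onI)
    fix i j assume "i \<in> {q..<n}" "j \<in> {q..<n}" "i < j"
    then show "w i < w j"
      unfolding w_def using lb sorted_wrt_nth_less[of "(<)" lb "i - q" "j - q"] by auto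
  qed
  have "inj_on w ({..<q} \<union> {q..<n})"
    using strict_mono_on_imp_inj_on[OF mono_head] strict_mono_on_imp_inj_on[OF mono_tail]
      head tail unfolding B_def inj_on_Un by blast
  then have "inj_on w {..<n}" using \<open>q \<le> n\<close> by (simp add: ivl_disj_un_one(2))
  then have "w permutes {..<n}"
  proof (rule inj_imp_permutes)
    show "w i \<in> {..<n}" if "i \<in> {..<n}" for i
      using that head tail A(1) \<open>q \<le> n\<close> unfolding B_def
      by (cases "i < q") (auto simp: image_subset_iff)
    show "w i = i" if "i \<notin> {..<n}" for i using that \<open>q \<le> n\<close> by (simp add: w_def)
  qed simp
  then show ?thesis using mono_head mono_tail head unfolding shuffle_perms_def by blast
qed

lemma shuffle_block_decomposition:
  fixes q n :: nat
  assumes qn: "q \<le> n"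
  shows "bij_betw (\<lambda>(w, r). w \<circ> r) (shuffle_perms q n \<times> block_perms q n)
           {p. p permutes {..<n}}"
proof (rule bij_betw_imageI)
  show "inj_on (\<lambda>(w, r). w \<circ> r) (shuffle_perms q n \<times> block_perms q n)"
  proof (rule inj_onI, clarsimp)
    fix w r w' r'
    assume w: "w \<in> shuffle_perms q n" "w' \<in> shuffle_perms q n"
      and r: "r \<in> block_perms q n" "r' \<in> block_perms q n" and eq: "w \<circ> r = w' \<circ> r'"
    have head_image: "(v \<circ> \<rho>) ` {..<q} = v ` {..<q}" if "\<rho> \<in> block_perms q n" for v \<rho>
      using that unfolding block_perms_def by (metis (mono_tags) image_comp mem_Collect_eq)
    have "w ` {..<q} = w' ` {..<q}"
      using head_image[OF r(1)] head_image[OF r(2)] eq by (metis (no_types))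
    then have "w = w'" using shuffle_eq_by_head_image[OF w qn] by simp
    have pw: "w permutes {..<n}" using w(1) by (simp add: shuffle_perms_def)
    have "r = inv w \<circ> (w \<circ> r)" by (simp add: o_assoc permutes_inv_o(2)[OF pw])
    also have "\<dots> = inv w \<circ> (w \<circ> r')" using eq \<open>w = w'\<close> by simp
    also have "\<dots> = r'" by (simp add: o_assoc permutes_inv_o(2)[OF pw])
    finally show "w = w' \<and> r = r'" using \<open>w = w'\<close> by simp
  qed
  show "(\<lambda>(w, r). w \<circ> r) ` (shuffle_perms q n \<times> block_perms q n) = {p. p permutes {..<n}}"
  proof
    show "(\<lambda>(w, r). w \<circ> r) ` (shuffle_perms q n \<times> block_perms q n) \<subseteq> {p. p permutes {..<n}}"
    proof (rule subsetI, elim imageE SigmaE, clarify)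
      fix w r assume "w \<in> shuffle_perms q n" "r \<in> block_perms q n"
      then show "w \<circ> r permutes {..<n}"
        unfolding shuffle_perms_def block_perms_def by (intro permutes_compose) simp_all
    qed
  next
    show "{p. p permutes {..<n}} \<subseteq> (\<lambda>(w, r). w \<circ> r) ` (shuffle_perms q n \<times> block_perms q n)"
    proof
      fix p assume "p \<in> {p. p permutes {..<n}}"
      then have p: "p permutes {..<n}" by simp
      have "p ` {..<q} \<subseteq> p ` {..<n}" using qn by (intro image_mono) auto
      then have "p ` {..<q} \<subseteq> {..<n}" by (simp only: permutes_image[OF p])
      moreover have "card (p ` {..<q}) = q" using card_image[OF permutes_inj_on[OF p]] by simp
      ultimately obtain w where w: "w \<in> shuffle_perms q n" "w ` {..<q} = p ` {..<q}"
        using shuffle_with_head_image[of "p ` {..<q}" n q] by blast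
      have pw: "w permutes {..<n}" using w(1) by (simp add: shuffle_perms_def)
      define r where "r = inv w \<circ> p"
      have "r permutes {..<n}" unfolding r_def by (rule permutes_compose[OF p permutes_inv[OF pw]])
      moreover have "r ` {..<q} = {..<q}"
      proof -
        have "r ` {..<q} = inv w ` (w ` {..<q})" unfolding r_def w(2) by (rule image_comp[symmetric])
        also have "\<dots> = {..<q}" by (simp add: image_comp permutes_inv_o(2)[OF pw])
        finally show ?thesis .
      qed
      moreover have "w \<circ> r = p" using permutes_inv_o(1)[OF pw] by (simp add: r_def o_assoc)
      ultimately show "p \<in> (\<lambda>(w, r). w \<circ> r) ` (shuffle_perms q n \<times> block_perms q n)"
        using w(1) unfolding block_perms_def by (intro image_eqI[of _ _ "(w, r)"]) auto
    qed
  qed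
qed

definition block_join :: "nat \<Rightarrow> nat \<Rightarrow> (nat \<Rightarrow> nat) \<Rightarrow> (nat \<Rightarrow> nat) \<Rightarrow> nat \<Rightarrow> nat" where
  "block_join q n s u i = (if i < q then s i else if i < n then q + u (i - q) else i)"

lemma block_join_in_block_perms:
  fixes q n :: nat
  assumes qn: "q \<le> n" and s: "s permutes {..<q}" and u: "u permutes {..<n - q}"
  shows "block_join q n s u \<in> block_perms q n"
proof -
  let ?j = "block_join q n s u"
  have head: "?j ` {..<q} = {..<q}"
    using permutes_image[OF s] by (simp add: block_join_def)
  have tail: "?j i \<in> {q..<n}" if "i \<in> {q..<n}" for i
    using that permutes_in_image[OF u, of "i - q"] by (auto simp: block_join_def)
  have "inj_on ?j {..<q}" using permutes_inj_on[OF s] by (simp add: inj_on_def block_join_def)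
  moreover have "inj_on ?j {q..<n}"
  proof (rule inj_onI)
    fix i j assume "i \<in> {q..<n}" "j \<in> {q..<n}" "?j i = ?j j"
    then have "u (i - q) = u (j - q)" and "q \<le> i" "q \<le> j" by (auto simp: block_join_def)
    then show "i = j" using injD[OF permutes_inj[OF u]] by fastforce
  qed
  moreover have "?j ` ({..<q} - {q..<n}) \<inter> ?j ` ({q..<n} - {..<q}) = {}"
  proof -
    have "{..<q} - {q..<n} = {..<q}" "{q..<n} - {..<q} = {q..<n}" by auto
    moreover have "?j ` {q..<n} \<subseteq> {q..<n}" using tail by blast
    ultimately show ?thesis using head by auto
  qed
  ultimately have "inj_on ?j ({..<q} \<union> {q..<n})" unfolding inj_on_Un by blast
  then have "inj_on ?j {..<n}" using qn by (simp add: ivl_disj_un_one(2))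
  then have "?j permutes {..<n}"
  proof (rule inj_imp_permutes)
    show "?j i \<in> {..<n}" if "i \<in> {..<n}" for i
    proof (cases "i < q")
      case True
      then have "?j i \<in> {..<q}" using head by blast
      then show ?thesis using qn by simp
    qed (use that tail in auto)
    show "?j i = i" if "i \<notin> {..<n}" for i using that qn by (simp add: block_join_def)
  qed simp
  with head show ?thesis by (simp add: block_perms_def)
qed

lemma block_perm_split:
  fixes q n :: nat
  assumes qn: "q \<le> n" and r: "r \<in> block_perms q n"
  obtains s u where "s permutes {..<q}" "u permutes {..<n - q}" "block_join q n s u = r"
proof -
  have rp: "r permutes {..<n}" and head: "r ` {..<q} = {..<q}"
    using r by (auto simp: block_perms_def)
  have tail: "r ` {q..<n} = {q..<n}"
    using permutes_image_tail[OF rp qn] head qn by auto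
  define s where "s i = (if i < q then r i else i)" for i
  define u where "u i = (if i < n - q then r (q + i) - q else i)" for i
  have r_tail: "q \<le> r (q + i) \<and> r (q + i) < n" if "i < n - q" for i
    using that tail by (metis add.commute atLeastLessThan_iff image_eqI le_add2 less_diff_conv)
  have "s permutes {..<q}"
  proof (rule inj_imp_permutes)
    show "inj_on s {..<q}" using permutes_inj_on[OF rp] by (auto simp: s_def inj_on_def)
    show "s i \<in> {..<q}" if "i \<in> {..<q}" for i using that head by (auto simp: s_def)
    show "s i = i" if "i \<notin> {..<q}" for i using that by (simp add: s_def)
  qed simp
  moreover have "u permutes {..<n - q}"
  proof (rule inj_imp_permutes)
    show "inj_on u {..<n - q}"
    proof (rule inj_onI)
      fix i j assume ij: "i \<in> {..<n - q}" "j \<in> {..<n - q}" "u i = u j"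
      then have "r (q + i) - q = r (q + j) - q" by (simp add: u_def)
      moreover have "q \<le> r (q + i)" "q \<le> r (q + j)" using r_tail ij by auto
      ultimately have "r (q + i) = r (q + j)" by linarith
      then show "i = j" using injD[OF permutes_inj[OF rp]] by fastforce
    qed
    show "u i \<in> {..<n - q}" if "i \<in> {..<n - q}" for i using that r_tail[of i] by (auto simp: u_def)
    show "u i = i" if "i \<notin> {..<n - q}" for i using that by (simp add: u_def)
  qed simp
  moreover have "block_join q n s u i = r i" for i
  proof -
    consider "i < q" | "q \<le> i" "i < n" | "n \<le> i" by linarith
    then show ?thesis
    proof cases
      case 2
      then have "q \<le> r i" "i - q < n - q" using r_tail[of "i - q"] by auto
      with 2 show ?thesis by (simp add: block_join_def u_def)
    qed (use permutes_not_in[OF rp] in \<open>auto simp: block_join_def s_def\<close>)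
  qed
  ultimately show ?thesis using that by blast
qed

lemma block_join_bij:
  fixes q n :: nat
  assumes qn: "q \<le> n"
  shows "bij_betw (\<lambda>(s, u). block_join q n s u)
           ({s. s permutes {..<q}} \<times> {u. u permutes {..<n - q}}) (block_perms q n)"
proof (rule bij_betw_imageI)
  show "inj_on (\<lambda>(s, u). block_join q n s u) ({s. s permutes {..<q}} \<times> {u. u permutes {..<n - q}})"
  proof (rule inj_onI, clarify)
    fix s u s' u'
    assume s: "s permutes {..<q}" "s' permutes {..<q}"
      and u: "u permutes {..<n - q}" "u' permutes {..<n - q}"
      and eq: "block_join q n s u = block_join q n s' u'"
    have "s i = s' i" for i
      using fun_cong[OF eq, of i] permutes_not_in[OF s(1)] permutes_not_in[OF s(2)]
      by (cases "i < q") (auto simp: block_join_def)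
    moreover have "u i = u' i" for i
      using fun_cong[OF eq, of "q + i"] permutes_not_in[OF u(1)] permutes_not_in[OF u(2)]
      by (cases "i < n - q") (auto simp: block_join_def less_diff_conv add.commute)
    ultimately show "s = s' \<and> u = u'" by auto
  qed
  show "(\<lambda>(s, u). block_join q n s u) ` ({s. s permutes {..<q}} \<times> {u. u permutes {..<n - q}})
      = block_perms q n"
    using block_join_in_block_perms[OF qn] block_perm_split[OF qn]
    by (auto simp: image_iff) (metis mem_Collect_eq)
qed

section \<open>Splitting the summand of R_(lam mu)\<close>

definition tri_prod :: "('a \<Rightarrow> 'a \<Rightarrow> 'b::comm_monoid_mult) \<Rightarrow> (nat \<Rightarrow> 'a) \<Rightarrow> nat \<Rightarrow> 'b" where
  "tri_prod F z m = (\<Prod>i<m. \<Prod>j\<in>{i<..<m}. F (z i) (z j))"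

definition cross_prod :: "('a \<Rightarrow> 'a \<Rightarrow> 'b::comm_monoid_mult) \<Rightarrow> (nat \<Rightarrow> 'a) \<Rightarrow> nat \<Rightarrow> nat \<Rightarrow> 'b" where
  "cross_prod F z q n = (\<Prod>i<q. \<Prod>j\<in>{q..<n}. F (z i) (z j))"

definition monomial_at :: "nat list \<Rightarrow> (nat \<Rightarrow> 'a::comm_monoid_mult) \<Rightarrow> 'a" where
  "monomial_at lam z = (\<Prod>i<length lam. z i ^ (lam ! i))"

definition flag_summand :: "nat list \<Rightarrow> 'a::field \<Rightarrow> (nat \<Rightarrow> 'a) \<Rightarrow> 'a" where
  "flag_summand lam t z = monomial_at lam z * tri_prod (\<lambda>a b. a - t * b) z (length lam)
     / tri_prod (\<lambda>a b. a - b) z (length lam)"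

definition cross_factor :: "'a::field \<Rightarrow> (nat \<Rightarrow> 'a) \<Rightarrow> nat \<Rightarrow> nat \<Rightarrow> 'a" where
  "cross_factor t z q n = cross_prod (\<lambda>a b. a - t * b) z q n / cross_prod (\<lambda>a b. a - b) z q n"

lemma R_fn_flag_sum:
  "R_fn lam x t = (\<Sum>s | s permutes {..<length lam}. flag_summand lam t (x \<circ> s))"
  unfolding R_fn_def flag_push_def flag_summand_def monomial_at_def tri_prod_def by simp

lemma flag_summand_cong:
  "(\<And>i. i < length lam \<Longrightarrow> z i = z' i) \<Longrightarrow> flag_summand lam t z = flag_summand lam t z'"
  unfolding flag_summand_def monomial_at_def tri_prod_def by (intro arg_cong2[where f = "(/)"]
    arg_cong2[where f = "(*)"] prod.cong refl) auto

lemma image_add_greaterThanLessThan_nat: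
  fixes a k b :: nat
  shows "{a + k<..<b} = (+) a ` {k<..<b - a}"
proof (rule set_eqI, rule iffI)
  fix x assume "x \<in> {a + k<..<b}"
  then show "x \<in> (+) a ` {k<..<b - a}" by (intro image_eqI[of _ _ "x - a"]) auto
qed auto

lemma tri_prod_split:
  fixes q n :: nat
  assumes "q \<le> n"
  shows "tri_prod F z n = tri_prod F z q * cross_prod F z q n * tri_prod F (\<lambda>k. z (q + k)) (n - q)"
proof -
  have head: "(\<Prod>i<q. \<Prod>j\<in>{i<..<n}. F (z i) (z j)) = tri_prod F z q * cross_prod F z q n"
  proof -
    have "(\<Prod>j\<in>{i<..<n}. F (z i) (z j)) =
        (\<Prod>j\<in>{i<..<q}. F (z i) (z j)) * (\<Prod>j\<in>{q..<n}. F (z i) (z j))" if "i < q" for i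
    proof -
      have "{i<..<n} = {i<..<q} \<union> {q..<n}" using that assms by auto
      then show ?thesis by (simp add: prod.union_disjoint ivl_disj_int)
    qed
    then show ?thesis by (simp add: prod.distrib tri_prod_def cross_prod_def)
  qed
  have tail: "(\<Prod>i\<in>{q..<n}. \<Prod>j\<in>{i<..<n}. F (z i) (z j)) = tri_prod F (\<lambda>k. z (q + k)) (n - q)"
  proof -
    have "{q..<n} = (+) q ` {..<n - q}" using assms by (simp add: lessThan_atLeast0)
    then show ?thesis
      unfolding tri_prod_def by (simp add: prod.reindex image_add_greaterThanLessThan_nat)
  qed
  have split: "{..<n} = {..<q} \<union> {q..<n}" using ivl_disj_un_one(2)[OF assms] by simp
  have "tri_prod F z n = (\<Prod>i<q. \<Prod>j\<in>{i<..<n}. F (z i) (z j))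
      * (\<Prod>i\<in>{q..<n}. \<Prod>j\<in>{i<..<n}. F (z i) (z j))"
    unfolding tri_prod_def split by (rule prod.union_disjoint) auto
  then show ?thesis using head tail by simp
qed

lemma monomial_at_append:
  assumes "length lam = q"
  shows "monomial_at (lam @ mu) z = monomial_at lam z * monomial_at mu (\<lambda>k. z (q + k))"
proof -
  have split: "{..<length (lam @ mu)} = {..<q} \<union> {q..<q + length mu}" using assms by auto
  have "monomial_at (lam @ mu) z = (\<Prod>i<q. z i ^ ((lam @ mu) ! i))
      * (\<Prod>i\<in>{q..<q + length mu}. z i ^ ((lam @ mu) ! i))"
    unfolding monomial_at_def split by (rule prod.union_disjoint) auto
  also have "(\<Prod>i<q. z i ^ ((lam @ mu) ! i)) = monomial_at lam z"
    unfolding monomial_at_def using assms by (simp add: nth_append)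
  also have "(\<Prod>i\<in>{q..<q + length mu}. z i ^ ((lam @ mu) ! i)) = monomial_at mu (\<lambda>k. z (q + k))"
  proof -
    have "{q..<q + length mu} = (+) q ` {..<length mu}" by (simp add: lessThan_atLeast0 add.commute)
    then show ?thesis unfolding monomial_at_def using assms by (simp add: prod.reindex nth_append)
  qed
  finally show ?thesis .
qed

lemma flag_summand_append:
  fixes q n :: nat
  assumes "q \<le> n" "length lam = q" "length mu = n - q"
  shows "flag_summand (lam @ mu) t z
    = cross_factor t z q n * flag_summand lam t z * flag_summand mu t (\<lambda>k. z (q + k))"
proof -
  have len: "length (lam @ mu) = n" using assms by simp
  show ?thesis
    unfolding flag_summand_def cross_factor_def len monomial_at_append[OF assms(2)]
      tri_prod_split[OF assms(1), of _ z] assms(2,3)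
    by (simp add: divide_inverse inverse_mult_distrib ac_simps)
qed

section \<open>Summing over the block stabilizer and over the shuffles\<close>

lemma cross_prod_block_invariant:
  fixes q n :: nat
  assumes r: "r \<in> block_perms q n" and qn: "q \<le> n"
  shows "cross_prod F (x \<circ> r) q n = cross_prod F x q n"
proof -
  have rp: "r permutes {..<n}" and head: "r ` {..<q} = {..<q}"
    using r by (auto simp: block_perms_def)
  have tail: "r ` {q..<n} = {q..<n}" using permutes_image_tail[OF rp qn] head qn by auto
  have bij_head: "bij_betw r {..<q} {..<q}" and bij_tail: "bij_betw r {q..<n} {q..<n}"
    using head tail permutes_inj_on[OF rp] by (auto simp: bij_betw_def)
  have "cross_prod F (x \<circ> r) q n = (\<Prod>i<q. \<Prod>j\<in>{q..<n}. F (x (r i)) (x j))"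
    unfolding cross_prod_def o_def by (rule prod.cong[OF refl], rule prod.reindex_bij_betw[OF bij_tail])
  also have "\<dots> = cross_prod F x q n"
    unfolding cross_prod_def by (rule prod.reindex_bij_betw[OF bij_head])
  finally show ?thesis .
qed

lemma block_perms_flag_sum:
  fixes q n :: nat and x :: "nat \<Rightarrow> 'a::field"
  assumes qn: "q \<le> n" and lam: "length lam = q" and mu: "length mu = n - q"
  shows "(\<Sum>r\<in>block_perms q n. flag_summand (lam @ mu) t (x \<circ> r))
    = cross_factor t x q n * R_fn lam x t * R_fn mu (\<lambda>k. x (q + k)) t"
proof -
  let ?x' = "\<lambda>k. x (q + k)"
  have summand: "flag_summand (lam @ mu) t (x \<circ> block_join q n s u)
      = cross_factor t x q n * (flag_summand lam t (x \<circ> s) * flag_summand mu t (?x' \<circ> u))"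
    if s: "s permutes {..<q}" and u: "u permutes {..<n - q}" for s u
  proof -
    let ?z = "x \<circ> block_join q n s u"
    have "cross_factor t ?z q n = cross_factor t x q n"
      unfolding cross_factor_def
        cross_prod_block_invariant[OF block_join_in_block_perms[OF qn s u] qn] ..
    moreover have "flag_summand lam t ?z = flag_summand lam t (x \<circ> s)"
      using lam by (intro flag_summand_cong) (simp add: block_join_def)
    moreover have "flag_summand mu t (\<lambda>k. ?z (q + k)) = flag_summand mu t (?x' \<circ> u)"
      using mu by (intro flag_summand_cong) (auto simp: block_join_def)
    ultimately show ?thesis by (simp add: flag_summand_append[OF qn lam mu])
  qed
  have "(\<Sum>r\<in>block_perms q n. flag_summand (lam @ mu) t (x \<circ> r))
      = (\<Sum>s | s permutes {..<q}. \<Sum>u | u permutes {..<n - q}.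
           flag_summand (lam @ mu) t (x \<circ> block_join q n s u))"
    by (simp add: sum.reindex_bij_betw[OF block_join_bij[OF qn], symmetric]
        sum.cartesian_product split_def)
  also have "\<dots> = (\<Sum>s | s permutes {..<q}. \<Sum>u | u permutes {..<n - q}.
           cross_factor t x q n * (flag_summand lam t (x \<circ> s) * flag_summand mu t (?x' \<circ> u)))"
    by (intro sum.cong refl) (simp add: summand)
  also have "\<dots> = cross_factor t x q n * ((\<Sum>s | s permutes {..<q}. flag_summand lam t (x \<circ> s))
      * (\<Sum>u | u permutes {..<n - q}. flag_summand mu t (?x' \<circ> u)))"
    by (subst sum_product) (simp only: sum_distrib_left)
  finally show ?thesis by (simp add: R_fn_flag_sum lam mu mult.assoc)
qed

lemma R_fn_append_shuffle_sum:
  fixes q n :: nat and y :: "nat \<Rightarrow> 'a::field"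
  assumes qn: "q \<le> n" and lam: "length lam = q" and mu: "length mu = n - q"
  shows "R_fn (lam @ mu) y t = (\<Sum>w\<in>shuffle_perms q n.
      cross_factor t (y \<circ> w) q n * R_fn lam (y \<circ> w) t * R_fn mu (\<lambda>k. (y \<circ> w) (q + k)) t)"
proof -
  have "length (lam @ mu) = n" using qn lam mu by simp
  then have "R_fn (lam @ mu) y t = (\<Sum>p | p permutes {..<n}. flag_summand (lam @ mu) t (y \<circ> p))"
    by (simp add: R_fn_flag_sum)
  also have "\<dots> = (\<Sum>w\<in>shuffle_perms q n. \<Sum>r\<in>block_perms q n.
      flag_summand (lam @ mu) t ((y \<circ> w) \<circ> r))"
    by (simp add: sum.reindex_bij_betw[OF shuffle_block_decomposition[OF qn], symmetric]
        sum.cartesian_product split_def o_assoc)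
  finally show ?thesis by (simp add: block_perms_flag_sum[OF qn lam mu])
qed

lemma grass_push_cross_prod:
  fixes g :: "(nat \<Rightarrow> 'a::field) \<Rightarrow> 'a"
  shows "grass_push q n (\<lambda>x. cross_prod (\<lambda>a b. a - t * b) x q n * g x) y
    = (\<Sum>w\<in>shuffle_perms q n. cross_factor t (y \<circ> w) q n * g (y \<circ> w))"
  unfolding grass_push_def shuffle_perms_def cross_factor_def
  by (simp add: cross_prod_def divide_inverse ac_simps)

theorem mainTheorem5:
  fixes q n :: nat and lam mu :: "nat list" and y :: "nat \<Rightarrow> 'a::field" and t :: 'a
  assumes "0 < q" and "q < n"
    and "length lam = q" and "length mu = n - q"
    and "inj_on y {..<n}"
    and "v_seq lam t \<noteq> 0" and "v_seq mu t \<noteq> 0" and "v_seq (lam @ mu) t \<noteq> 0"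
  shows "grass_push q n
           (\<lambda>x. (\<Prod>i<q. \<Prod>j\<in>{q..<n}. (x i - t * x j))
                 * P_fn lam x t * P_fn mu (\<lambda>k. x (q + k)) t) y
         = (v_seq (lam @ mu) t / (v_seq lam t * v_seq mu t)) * P_fn (lam @ mu) y t"
proof -
  have qn: "q \<le> n" using assms(2) by simp
  let ?vl = "v_seq lam t" and ?vm = "v_seq mu t"
  have "grass_push q n
           (\<lambda>x. (\<Prod>i<q. \<Prod>j\<in>{q..<n}. (x i - t * x j))
                 * P_fn lam x t * P_fn mu (\<lambda>k. x (q + k)) t) y
      = grass_push q n (\<lambda>x. cross_prod (\<lambda>a b. a - t * b) x q n
                 * (P_fn lam x t * P_fn mu (\<lambda>k. x (q + k)) t)) y"
    by (simp add: cross_prod_def mult.assoc)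
  also have "\<dots> = (\<Sum>w\<in>shuffle_perms q n. cross_factor t (y \<circ> w) q n
      * (P_fn lam (y \<circ> w) t * P_fn mu (\<lambda>k. (y \<circ> w) (q + k)) t))"
    by (rule grass_push_cross_prod)
  also have "\<dots> = (\<Sum>w\<in>shuffle_perms q n. cross_factor t (y \<circ> w) q n
      * R_fn lam (y \<circ> w) t * R_fn mu (\<lambda>k. (y \<circ> w) (q + k)) t) / (?vl * ?vm)"
    by (simp add: P_fn_def sum_divide_distrib mult.assoc)
  also have "\<dots> = R_fn (lam @ mu) y t / (?vl * ?vm)"
    unfolding R_fn_append_shuffle_sum[OF qn assms(3,4)] o_def ..
  also have "\<dots> = (v_seq (lam @ mu) t / (?vl * ?vm)) * P_fn (lam @ mu) y t"
    using assms(8) by (simp add: P_fn_def)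
  finally show ?thesis .
qed

end
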